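(* (Soundness of rule Init.) Let $A$ be a predicate over $X_{\mathrm{all}}\cup E\cup U$, $\mathbf{x}\in X_{\mathrm{all}}$ a program variable, and $\mathbf{e}\notin E\cup U$ an entangled ghost of the same type as $\mathbf{x}$. Then $\{A\}\ \mathbf{init}\ \mathbf{x}\ \{A\{\mathbf{e}/\mathbf{x}\},\ \mathbf{x}=_q|0\rangle\}$, where $A\{\mathbf{e}/\mathbf{x}\}$ is the predicate obtained from $A$ by renaming $\mathbf{x}$ to $\mathbf{e}$ (the image of $A$ under the canonical isomorphism $|i\rangle_{\mathbf{x}}\mapsto|i\rangle_{\mathbf{e}}$ tensored with identity), and the comma denotes intersection.
   Context: Variables have types (sets containing a distinguished $0$) and are program variables, entangled ghosts, or unentangled ghosts. $\ell^2[V]$ is the Hilbert space with orthonormal basis indexed by assignments on $V$; mixed memories are positive trace-class operators; $\mathrm{tr}_W$ is partial trace; $\mathrm{supp}\,\rho$ is the closure of the range; $(V,W)$-separable means a convergent sum of $\rho_i\otimes\rho_i'$ of mixed memories over $V$ and $W$. A predicate over $V$ is a closed subspace of $\ell^2[V]$; $(W=_q\psi):=\mathrm{span}\{\psi\}\otimes\ell^2[V\setminus W]$; predicates over different variable sets are identified if they agree after tensoring with full spaces of missing variables. $\rho$ over program variables $X$ satisfies a predicate $A$ over $X\cup E\cup U$ iff there is an $(X\cup E,U)$-separable $\rho^\circ$ over $X\cup E\cup U$ with $\mathrm{supp}\,\rho^\circ\subseteq A$ and $\mathrm{tr}_{E\cup U}\rho^\circ=\rho$. $X_{\mathrm{all}}$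 is a fixed set of program variables; $[\![\mathbf{init}\ \mathbf{x}]\!](\rho)=\mathrm{tr}_{\mathbf{x}}\rho\otimes|0\rangle\langle0|_{\mathbf{x}}$ on mixed memories over $X_{\mathrm{all}}$. $\{A\}c\{B\}$ means that for all mixed memories $\rho$ over $X_{\mathrm{all}}$ with $\rho\models A$, $[\![c]\!](\rho)\models B$. *)

theory Defs
  imports "HOL-Analysis.Analysis"
begin

text \<open>T v is the type (a set) of variable v,
  z v \<in> T v its distinguished 0.  An assignment on V is a function that maps every
  v \<in> V into T v and is undefined outside V.  Operators (mixed memories) are
  represented by their matrix kernels w.r.t. the computational basis.\<close>

datatype vkind = Prog | EGhost | UGhost

definition asg :: "('v \<Rightarrow> 'a set) \<Rightarrow> 'v set \<Rightarrow> ('v \<Rightarrow> 'a) set" where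
  "asg T V = {m. (\<forall>v\<in>V. m v \<in> T v) \<and> (\<forall>v. v \<notin> V \<longrightarrow> m v = undefined)}"

definition restr :: "'v set \<Rightarrow> ('v \<Rightarrow> 'a) \<Rightarrow> ('v \<Rightarrow> 'a)" where
  "restr V m = (\<lambda>v. if v \<in> V then m v else undefined)"

definition merge :: "'v set \<Rightarrow> ('v \<Rightarrow> 'a) \<Rightarrow> ('v \<Rightarrow> 'a) \<Rightarrow> ('v \<Rightarrow> 'a)" where
  "merge W u s = (\<lambda>v. if v \<in> W then u v else s v)"

text \<open>The Hilbert space l2[V] (as functions on assignments, zero outside asg V).\<close>
definition l2 :: "('v \<Rightarrow> 'a set) \<Rightarrow> 'v set \<Rightarrow> (('v \<Rightarrow> 'a) \<Rightarrow> complex) set" where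
  "l2 T V = {\<psi>. (\<forall>m. m \<notin> asg T V \<longrightarrow> \<psi> m = 0) \<and>
                 (\<lambda>m. (cmod (\<psi> m))^2) summable_on asg T V}"

definition l2norm :: "('v \<Rightarrow> 'a set) \<Rightarrow> 'v set \<Rightarrow> (('v \<Rightarrow> 'a) \<Rightarrow> complex) \<Rightarrow> real" where
  "l2norm T V \<psi> = sqrt (infsum (\<lambda>m. (cmod (\<psi> m))^2) (asg T V))"

definition l2closure :: "('v \<Rightarrow> 'a set) \<Rightarrow> 'v set \<Rightarrow> (('v \<Rightarrow> 'a) \<Rightarrow> complex) set
     \<Rightarrow> (('v \<Rightarrow> 'a) \<Rightarrow> complex) set" where
  "l2closure T V S = {\<psi> \<in> l2 T V. \<exists>f. (\<forall>n. f n \<in> S) \<and>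
      (\<lambda>n. l2norm T V (\<lambda>m. f n m - \<psi> m)) \<longlonglongrightarrow> 0}"

definition is_predicate :: "('v \<Rightarrow> 'a set) \<Rightarrow> 'v set \<Rightarrow> (('v \<Rightarrow> 'a) \<Rightarrow> complex) set \<Rightarrow> bool" where
  "is_predicate T V A \<longleftrightarrow> A \<subseteq> l2 T V \<and> (\<lambda>_. 0) \<in> A \<and>
     (\<forall>\<phi>\<in>A. \<forall>\<psi>\<in>A. (\<lambda>m. \<phi> m + \<psi> m) \<in> A) \<and>
     (\<forall>c. \<forall>\<phi>\<in>A. (\<lambda>m. c * \<phi> m) \<in> A) \<and> l2closure T V A \<subseteq> A"

definition lin_span_c :: "(('v \<Rightarrow> 'a) \<Rightarrow> complex) set \<Rightarrow> (('v \<Rightarrow> 'a) \<Rightarrow> complex) set" where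
  "lin_span_c S = {\<psi>. \<exists>(n::nat) c \<phi>. (\<forall>i<n. \<phi> i \<in> S) \<and> \<psi> = (\<lambda>m. \<Sum>i<n. c i * \<phi> i m)}"

text \<open>Tensor product of vectors over disjoint V and W.\<close>
definition vtensor :: "('v \<Rightarrow> 'a set) \<Rightarrow> 'v set \<Rightarrow> 'v set \<Rightarrow> (('v \<Rightarrow> 'a) \<Rightarrow> complex)
    \<Rightarrow> (('v \<Rightarrow> 'a) \<Rightarrow> complex) \<Rightarrow> (('v \<Rightarrow> 'a) \<Rightarrow> complex)" where
  "vtensor T V W \<phi> \<eta> = (\<lambda>m. if m \<in> asg T (V \<union> W) then \<phi> (restr V m) * \<eta> (restr W m) else 0)"

text \<open>Identification of a predicate S over V with the predicate S \<otimes> l2[W] over V \<union> W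
  (closed span of the elementary tensors).\<close>
definition lift :: "('v \<Rightarrow> 'a set) \<Rightarrow> 'v set \<Rightarrow> 'v set \<Rightarrow> (('v \<Rightarrow> 'a) \<Rightarrow> complex) set
    \<Rightarrow> (('v \<Rightarrow> 'a) \<Rightarrow> complex) set" where
  "lift T V W S = l2closure T (V \<union> W)
      (lin_span_c {vtensor T V W \<phi> \<eta> | \<phi> \<eta>. \<phi> \<in> S \<and> \<eta> \<in> l2 T W})"

definition ket0 :: "('v \<Rightarrow> 'a) \<Rightarrow> 'v set \<Rightarrow> (('v \<Rightarrow> 'a) \<Rightarrow> complex)" where
  "ket0 z V = (\<lambda>m. if m = restr V z then 1 else 0)"

text \<open>(W =q psi) as a predicate over V: span{psi} \<otimes> l2[V - W].\<close>
definition qeq :: "('v \<Rightarrow> 'a set) \<Rightarrow> 'v set \<Rightarrow> (('v \<Rightarrow> 'a) \<Rightarrow> complex) \<Rightarrow> 'v set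
    \<Rightarrow> (('v \<Rightarrow> 'a) \<Rightarrow> complex) set" where
  "qeq T W \<psi> V = lift T W (V - W) (lin_span_c {\<psi>})"

text \<open>Renaming A{e/x}: image of A (over Y, x \<in> Y, e \<notin> Y) under |i>_x \<mapsto> |i>_e.\<close>
definition rename_pred :: "('v \<Rightarrow> 'a set) \<Rightarrow> 'v set \<Rightarrow> 'v \<Rightarrow> 'v \<Rightarrow> (('v \<Rightarrow> 'a) \<Rightarrow> complex) set
    \<Rightarrow> (('v \<Rightarrow> 'a) \<Rightarrow> complex) set" where
  "rename_pred T Y x e A = {(\<lambda>m. if m \<in> asg T ((Y - {x}) \<union> {e})
        then \<psi> (m(x := m e, e := undefined)) else 0) | \<psi>. \<psi> \<in> A}"

text \<open>Mixed memory over V: (kernel of) a positive trace-class operator on l2[V].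
  Positivity is tested on finitely supported vectors; trace class = summable diagonal.\<close>
definition mixed_memory :: "('v \<Rightarrow> 'a set) \<Rightarrow> 'v set \<Rightarrow> (('v \<Rightarrow> 'a) \<Rightarrow> ('v \<Rightarrow> 'a) \<Rightarrow> complex) \<Rightarrow> bool" where
  "mixed_memory T V \<rho> \<longleftrightarrow>
     (\<forall>s t. s \<notin> asg T V \<or> t \<notin> asg T V \<longrightarrow> \<rho> s t = 0) \<and>
     (\<forall>F c. finite F \<and> F \<subseteq> asg T V \<longrightarrow>
        Im (\<Sum>s\<in>F. \<Sum>t\<in>F. cnj (c s) * \<rho> s t * c t) = 0 \<and>
        0 \<le> Re (\<Sum>s\<in>F. \<Sum>t\<in>F. cnj (c s) * \<rho> s t * c t)) \<and>
     (\<lambda>s. \<rho> s s) summable_on asg T V"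

definition ktensor :: "('v \<Rightarrow> 'a set) \<Rightarrow> 'v set \<Rightarrow> 'v set
    \<Rightarrow> (('v \<Rightarrow> 'a) \<Rightarrow> ('v \<Rightarrow> 'a) \<Rightarrow> complex) \<Rightarrow> (('v \<Rightarrow> 'a) \<Rightarrow> ('v \<Rightarrow> 'a) \<Rightarrow> complex)
    \<Rightarrow> (('v \<Rightarrow> 'a) \<Rightarrow> ('v \<Rightarrow> 'a) \<Rightarrow> complex)" where
  "ktensor T V W \<rho> \<sigma> = (\<lambda>s t. if s \<in> asg T (V \<union> W) \<and> t \<in> asg T (V \<union> W)
      then \<rho> (restr V s) (restr V t) * \<sigma> (restr W s) (restr W t) else 0)"

definition ptrace :: "('v \<Rightarrow> 'a set) \<Rightarrow> 'v set \<Rightarrow> 'v set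
    \<Rightarrow> (('v \<Rightarrow> 'a) \<Rightarrow> ('v \<Rightarrow> 'a) \<Rightarrow> complex) \<Rightarrow> (('v \<Rightarrow> 'a) \<Rightarrow> ('v \<Rightarrow> 'a) \<Rightarrow> complex)" where
  "ptrace T Y W \<rho> = (\<lambda>s t. if s \<in> asg T (Y - W) \<and> t \<in> asg T (Y - W)
      then infsum (\<lambda>u. \<rho> (merge W u s) (merge W u t)) (asg T W) else 0)"

definition proj0 :: "('v \<Rightarrow> 'a) \<Rightarrow> 'v set \<Rightarrow> (('v \<Rightarrow> 'a) \<Rightarrow> ('v \<Rightarrow> 'a) \<Rightarrow> complex)" where
  "proj0 z V = (\<lambda>s t. if s = restr V z \<and> t = restr V z then 1 else 0)"

definition kapply :: "('v \<Rightarrow> 'a set) \<Rightarrow> 'v set \<Rightarrow> (('v \<Rightarrow> 'a) \<Rightarrow> ('v \<Rightarrow> 'a) \<Rightarrow> complex)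
    \<Rightarrow> (('v \<Rightarrow> 'a) \<Rightarrow> complex) \<Rightarrow> (('v \<Rightarrow> 'a) \<Rightarrow> complex)" where
  "kapply T V \<rho> \<psi> = (\<lambda>s. infsum (\<lambda>t. \<rho> s t * \<psi> t) (asg T V))"

definition supp :: "('v \<Rightarrow> 'a set) \<Rightarrow> 'v set \<Rightarrow> (('v \<Rightarrow> 'a) \<Rightarrow> ('v \<Rightarrow> 'a) \<Rightarrow> complex)
    \<Rightarrow> (('v \<Rightarrow> 'a) \<Rightarrow> complex) set" where
  "supp T V \<rho> = l2closure T V {kapply T V \<rho> \<psi> | \<psi>. \<psi> \<in> l2 T V}"

definition separable :: "('v \<Rightarrow> 'a set) \<Rightarrow> 'v set \<Rightarrow> 'v set
    \<Rightarrow> (('v \<Rightarrow> 'a) \<Rightarrow> ('v \<Rightarrow> 'a) \<Rightarrow> complex) \<Rightarrow> bool" where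
  "separable T V W \<rho> \<longleftrightarrow> (\<exists>\<rho>1 \<rho>2. (\<forall>i::nat. mixed_memory T V (\<rho>1 i) \<and> mixed_memory T W (\<rho>2 i)) \<and>
      (\<forall>s t. (\<lambda>i. ktensor T V W (\<rho>1 i) (\<rho>2 i) s t) sums \<rho> s t))"

definition satisfies :: "('v \<Rightarrow> 'a set) \<Rightarrow> 'v set \<Rightarrow> 'v set \<Rightarrow> 'v set
    \<Rightarrow> (('v \<Rightarrow> 'a) \<Rightarrow> ('v \<Rightarrow> 'a) \<Rightarrow> complex) \<Rightarrow> (('v \<Rightarrow> 'a) \<Rightarrow> complex) set \<Rightarrow> bool" where
  "satisfies T X E U \<rho> A \<longleftrightarrow> (\<exists>\<rho>o. mixed_memory T (X \<union> E \<union> U) \<rho>o \<and>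
      separable T (X \<union> E) U \<rho>o \<and> supp T (X \<union> E \<union> U) \<rho>o \<subseteq> A \<and>
      ptrace T (X \<union> E \<union> U) (E \<union> U) \<rho>o = \<rho>)"

definition init_sem :: "('v \<Rightarrow> 'a set) \<Rightarrow> ('v \<Rightarrow> 'a) \<Rightarrow> 'v set \<Rightarrow> 'v
    \<Rightarrow> (('v \<Rightarrow> 'a) \<Rightarrow> ('v \<Rightarrow> 'a) \<Rightarrow> complex) \<Rightarrow> (('v \<Rightarrow> 'a) \<Rightarrow> ('v \<Rightarrow> 'a) \<Rightarrow> complex)" where
  "init_sem T z Xall x \<rho> = ktensor T (Xall - {x}) {x} (ptrace T Xall {x} \<rho>) (proj0 z {x})"

definition hoare :: "('v \<Rightarrow> 'a set) \<Rightarrow> 'v set \<Rightarrow> 'v set \<Rightarrow> 'v set \<Rightarrow> (('v \<Rightarrow> 'a) \<Rightarrow> complex) set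
    \<Rightarrow> ((('v \<Rightarrow> 'a) \<Rightarrow> ('v \<Rightarrow> 'a) \<Rightarrow> complex) \<Rightarrow> (('v \<Rightarrow> 'a) \<Rightarrow> ('v \<Rightarrow> 'a) \<Rightarrow> complex))
    \<Rightarrow> 'v set \<Rightarrow> 'v set \<Rightarrow> (('v \<Rightarrow> 'a) \<Rightarrow> complex) set \<Rightarrow> bool" where
  "hoare T Xall E U A c E' U' B \<longleftrightarrow>
     (\<forall>\<rho>. mixed_memory T Xall \<rho> \<longrightarrow> satisfies T Xall E U \<rho> A \<longrightarrow> satisfies T Xall E' U' (c \<rho>) B)"

end

theory Submission
  imports Defs
begin

text \<open>If \<open>\<rho>\<degree>\<close> witnesses \<open>\<rho> \<Turnstile> A\<close>, then \<open>\<rho>\<degree>{e/x} \<otimes> |0\<rangle>\<langle>0|\<^sub>x\<close> witnesses the postcondition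
  for \<open>init x\<close>. Renaming \<open>x\<close> to the fresh ghost \<open>e\<close> and adjoining \<open>|0\<rangle>\<langle>0|\<^sub>x\<close> preserves positivity,
  trace class and separability; the range of the new operator is the renamed range of \<open>\<rho>\<degree>\<close>
  tensored with \<open>|0\<rangle>\<^sub>x\<close>, so its support lies in \<open>A{e/x}\<close> and in \<open>x =\<^sub>q |0\<rangle>\<close>; and tracing out
  \<open>E \<union> U\<close> commutes with the renaming, after which tracing out \<open>e\<close> is exactly \<open>tr\<^sub>x(-) \<otimes> |0\<rangle>\<langle>0|\<^sub>x\<close>.
  The partial traces may be taken in stages because the kernel of a positive trace-class operator
  satisfies \<open>|\<rho>(s,t)|\<^sup>2 \<le> \<rho>(s,s) \<rho>(t,t)\<close>, which makes the double sums absolutely convergent.\<close>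

lemma asgI: "(\<And>v. v \<in> V \<Longrightarrow> m v \<in> T v) \<Longrightarrow> (\<And>v. v \<notin> V \<Longrightarrow> m v = undefined) \<Longrightarrow> m \<in> asg T V"
  unfolding asg_def by blast

lemma asg_in_type: "m \<in> asg T V \<Longrightarrow> v \<in> V \<Longrightarrow> m v \<in> T v"
  unfolding asg_def by blast

lemma asg_undefined: "m \<in> asg T V \<Longrightarrow> v \<notin> V \<Longrightarrow> m v = undefined"
  unfolding asg_def by blast

lemma restr_in_asg: "s \<in> asg T Y \<Longrightarrow> Z \<subseteq> Y \<Longrightarrow> restr Z s \<in> asg T Z"
  by (intro asgI) (auto simp: restr_def dest: asg_in_type)

lemma merge_in_asg: "u \<in> asg T W \<Longrightarrow> s \<in> asg T X \<Longrightarrow> merge W u s \<in> asg T (W \<union> X)"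
  by (rule asgI) (auto simp: merge_def dest: asg_in_type asg_undefined)

subsection \<open>Mixed memories\<close>

lemma mixed_memoryI:
  assumes "\<And>s t. s \<notin> asg T V \<or> t \<notin> asg T V \<Longrightarrow> \<rho> s t = 0"
    and "\<And>F c. finite F \<Longrightarrow> F \<subseteq> asg T V \<Longrightarrow>
           Im (\<Sum>s\<in>F. \<Sum>t\<in>F. cnj (c s) * \<rho> s t * c t) = 0 \<and>
           0 \<le> Re (\<Sum>s\<in>F. \<Sum>t\<in>F. cnj (c s) * \<rho> s t * c t)"
    and "(\<lambda>s. \<rho> s s) summable_on asg T V"
  shows "mixed_memory T V \<rho>"
  using assms unfolding mixed_memory_def by blast

lemma mixed_memory_zero:
  "mixed_memory T V \<rho> \<Longrightarrow> s \<notin> asg T V \<or> t \<notin> asg T V \<Longrightarrow> \<rho> s t = 0"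
  unfolding mixed_memory_def by blast

lemma mixed_memory_form_nonneg:
  assumes "mixed_memory T V \<rho>" "finite F" "F \<subseteq> asg T V"
  shows "Im (\<Sum>s\<in>F. \<Sum>t\<in>F. cnj (c s) * \<rho> s t * c t) = 0 \<and>
         0 \<le> Re (\<Sum>s\<in>F. \<Sum>t\<in>F. cnj (c s) * \<rho> s t * c t)"
  using assms unfolding mixed_memory_def by blast

lemma mixed_memory_diag_summable:
  "mixed_memory T V \<rho> \<Longrightarrow> (\<lambda>s. \<rho> s s) summable_on asg T V"
  unfolding mixed_memory_def by blast

lemma mixed_memory_diag_Re_summable:
  "mixed_memory T V \<rho> \<Longrightarrow> (\<lambda>s. Re (\<rho> s s)) summable_on asg T V"
  by (rule summable_on_Re[OF mixed_memory_diag_summable])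

lemma mixed_memory_diag:
  assumes mm: "mixed_memory T V \<rho>"
  shows "Im (\<rho> s s) = 0 \<and> 0 \<le> Re (\<rho> s s)"
proof (cases "s \<in> asg T V")
  case False
  then show ?thesis using mixed_memory_zero[OF mm] by simp
next
  case True
  then show ?thesis
    using mixed_memory_form_nonneg[OF mm, of "{s}" "\<lambda>_. 1"] by simp
qed

lemma mixed_memory_cnj:
  assumes mm: "mixed_memory T V \<rho>"
  shows "\<rho> t s = cnj (\<rho> s t)"
proof (cases "s \<in> asg T V \<and> t \<in> asg T V \<and> s \<noteq> t")
  case False
  then show ?thesis
    using mixed_memory_zero[OF mm] mixed_memory_diag[OF mm, of s] by (auto simp: complex_eq_iff)
next
  case True
  then have F: "finite {s, t}" "{s, t} \<subseteq> asg T V" and st: "s \<noteq> t" by auto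
  have d: "Im (\<rho> s s) = 0" "Im (\<rho> t t) = 0"
    using mixed_memory_diag[OF mm] by auto
  have "Im (\<rho> s t) + Im (\<rho> t s) = 0"
    using mixed_memory_form_nonneg[OF mm F, of "\<lambda>_. 1"] st d by simp
  moreover have "Re (\<rho> s t) - Re (\<rho> t s) = 0"
    using mixed_memory_form_nonneg[OF mm F, of "\<lambda>v. if v = t then \<i> else 1"] st d by simp
  ultimately show ?thesis by (simp add: complex_eq_iff)
qed

lemma mixed_memory_quadratic_nonneg:
  assumes mm: "mixed_memory T V \<rho>" and st: "s \<in> asg T V" "t \<in> asg T V" "s \<noteq> t"
  shows "0 \<le> Re (\<rho> s s) * r^2 * (cmod (\<rho> s t))^2 - 2 * r * (cmod (\<rho> s t))^2 + Re (\<rho> t t)"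
proof -
  define a b w where "a = Re (\<rho> s s)" and "b = Re (\<rho> t t)" and "w = \<rho> s t"
  define c where "c v = (if v = s then - (of_real r * w) else 1)" for v
  have ss: "\<rho> s s = of_real a" and tt: "\<rho> t t = of_real b"
    using mixed_memory_diag[OF mm] unfolding a_def b_def by (auto simp: complex_eq_iff)
  have ts: "\<rho> t s = cnj w"
    unfolding w_def by (rule mixed_memory_cnj[OF mm])
  have "(\<Sum>u\<in>{s,t}. \<Sum>v\<in>{s,t}. cnj (c u) * \<rho> u v * c v)
      = of_real (r^2 * a) * (w * cnj w) - 2 * of_real r * (w * cnj w) + of_real b"
    using st(3) by (simp add: c_def ss tt ts w_def[symmetric] algebra_simps power2_eq_square)
  also have "\<dots> = of_real (a * r^2 * (cmod w)^2 - 2 * r * (cmod w)^2 + b)"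
    unfolding complex_norm_square[symmetric] by (simp add: algebra_simps)
  finally show ?thesis
    using mixed_memory_form_nonneg[OF mm, of "{s,t}" c] st unfolding a_def b_def w_def by simp
qed

lemma mixed_memory_norm_sq_le:
  assumes mm: "mixed_memory T V \<rho>"
  shows "(cmod (\<rho> s t))^2 \<le> Re (\<rho> s s) * Re (\<rho> t t)"
proof (cases "s \<in> asg T V \<and> t \<in> asg T V \<and> s \<noteq> t \<and> \<rho> s t \<noteq> 0")
  case False
  have "s = t \<Longrightarrow> cmod (\<rho> s s) = Re (\<rho> s s)"
    using mixed_memory_diag[OF mm, of s] by (simp add: cmod_eq_Re)
  then show ?thesis
    using False mixed_memory_zero[OF mm, of s t] mixed_memory_diag[OF mm]
    by (auto simp: power2_eq_square)
next
  case True
  define a where "a = Re (\<rho> s s)"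
  define n where "n = (cmod (\<rho> s t))^2"
  have n: "0 < n" using True unfolding n_def by simp
  have key: "0 \<le> a * r^2 * n - 2 * r * n + Re (\<rho> t t)" for r
    unfolding a_def n_def using True by (intro mixed_memory_quadratic_nonneg[OF mm]) auto
  have "0 < a"
  proof (rule ccontr)
    assume "\<not> 0 < a"
    then have "a = 0" using mixed_memory_diag[OF mm, of s] a_def by simp
    then show False
      using key[of "(Re (\<rho> t t) + 1) / (2 * n)"] n by (simp add: field_simps)
  qed
  then have "n / a \<le> Re (\<rho> t t)"
    using key[of "1 / a"] by (simp add: field_simps power2_eq_square)
  then show ?thesis
    using \<open>0 < a\<close> unfolding a_def n_def by (simp add: divide_le_eq mult.commute)
qed

lemma mixed_memory_norm_le_sqrt:
  assumes mm: "mixed_memory T V \<rho>"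
  shows "cmod (\<rho> s t) \<le> sqrt (Re (\<rho> s s)) * sqrt (Re (\<rho> t t))"
  using real_sqrt_le_mono[OF mixed_memory_norm_sq_le[OF mm, of s t]]
  by (simp add: real_sqrt_mult)

lemma mixed_memory_norm_le_mean:
  assumes mm: "mixed_memory T V \<rho>"
  shows "cmod (\<rho> s t) \<le> (Re (\<rho> s s) + Re (\<rho> t t)) / 2"
  using mixed_memory_norm_le_sqrt[OF mm, of s t] mixed_memory_diag[OF mm]
    arith_geo_mean_sqrt[of "Re (\<rho> s s)" "Re (\<rho> t t)"]
  by (simp add: real_sqrt_mult)

lemma l2I:
  "(\<And>m. m \<notin> asg T V \<Longrightarrow> \<psi> m = 0) \<Longrightarrow> (\<lambda>m. (cmod (\<psi> m))^2) summable_on asg T V \<Longrightarrow> \<psi> \<in> l2 T V"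
  unfolding l2_def by blast

lemma l2_norm_sq_summable: "\<psi> \<in> l2 T V \<Longrightarrow> (\<lambda>m. (cmod (\<psi> m))^2) summable_on asg T V"
  unfolding l2_def by blast

lemma kapply_norm_le:
  assumes mm: "mixed_memory T V \<rho>" and \<psi>: "\<psi> \<in> l2 T V"
  obtains K where "\<And>s. cmod (kapply T V \<rho> \<psi> s) \<le> sqrt (Re (\<rho> s s)) * K"
proof
  define d where "d s = Re (\<rho> s s)" for s
  define h where "h t = sqrt (d t) * cmod (\<psi> t)" for t
  have d0: "0 \<le> d s" for s
    using mixed_memory_diag[OF mm] d_def by auto
  have h_summable: "h summable_on asg T V"
  proof (rule summable_on_comparison_test)
    show "(\<lambda>t. (d t + (cmod (\<psi> t))^2) * (1/2)) summable_on asg T V"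
      unfolding d_def
      by (intro summable_on_cmult_left summable_on_add mixed_memory_diag_Re_summable[OF mm]
          l2_norm_sq_summable[OF \<psi>])
    show "h t \<le> (d t + (cmod (\<psi> t))^2) * (1/2)" for t
      using arith_geo_mean_sqrt[of "d t" "(cmod (\<psi> t))^2"] d0[of t]
      unfolding h_def by (simp add: real_sqrt_mult)
  qed (simp add: h_def d0)
  fix s
  have le: "norm (\<rho> s t * \<psi> t) \<le> sqrt (d s) * h t" for t
    using mult_right_mono[OF mixed_memory_norm_le_sqrt[OF mm, of s t] norm_ge_zero[of "\<psi> t"]]
    unfolding h_def d_def by (simp add: norm_mult mult.assoc)
  have dom: "(\<lambda>t. sqrt (d s) * h t) summable_on asg T V"
    by (rule summable_on_cmult_right[OF h_summable])
  have abs: "(\<lambda>t. norm (\<rho> s t * \<psi> t)) summable_on asg T V"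
    by (rule summable_on_comparison_test[OF dom]) (use le in auto)
  have "cmod (kapply T V \<rho> \<psi> s) \<le> infsum (\<lambda>t. norm (\<rho> s t * \<psi> t)) (asg T V)"
    unfolding kapply_def by (rule norm_infsum_bound) (use abs in simp)
  also have "\<dots> \<le> infsum (\<lambda>t. sqrt (d s) * h t) (asg T V)"
    by (rule infsum_mono[OF abs dom le])
  also have "\<dots> = sqrt (d s) * infsum h (asg T V)"
    by (rule infsum_cmult_right')
  finally show "cmod (kapply T V \<rho> \<psi> s) \<le> sqrt (Re (\<rho> s s)) * infsum h (asg T V)"
    unfolding d_def .
qed

lemma kapply_l2:
  assumes mm: "mixed_memory T V \<rho>" and \<psi>: "\<psi> \<in> l2 T V"
  shows "kapply T V \<rho> \<psi> \<in> l2 T V"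
proof (rule l2I)
  obtain K where bound: "\<And>s. cmod (kapply T V \<rho> \<psi> s) \<le> sqrt (Re (\<rho> s s)) * K"
    using kapply_norm_le[OF mm \<psi>] by blast
  show "(\<lambda>m. (cmod (kapply T V \<rho> \<psi> m))^2) summable_on asg T V"
  proof (rule summable_on_comparison_test)
    show "(\<lambda>m. Re (\<rho> m m) * K^2) summable_on asg T V"
      by (rule summable_on_cmult_left[OF mixed_memory_diag_Re_summable[OF mm]])
    show "(cmod (kapply T V \<rho> \<psi> m))^2 \<le> Re (\<rho> m m) * K^2" for m
      using power_mono[OF bound[of m] norm_ge_zero, of 2] mixed_memory_diag[OF mm, of m]
      by (simp add: power_mult_distrib)
  qed simp
  show "kapply T V \<rho> \<psi> m = 0" if "m \<notin> asg T V" for m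
    unfolding kapply_def using mixed_memory_zero[OF mm] that by simp
qed

lemma l2closure_superset: "\<phi> \<in> S \<Longrightarrow> \<phi> \<in> l2 T V \<Longrightarrow> \<phi> \<in> l2closure T V S"
  unfolding l2closure_def l2norm_def by (auto intro!: exI[of _ "\<lambda>_. \<phi>"])

lemma l2closure_mono: "S \<subseteq> S' \<Longrightarrow> l2closure T V S \<subseteq> l2closure T V S'"
  unfolding l2closure_def by blast

lemma lin_span_c_superset: "\<phi> \<in> S \<Longrightarrow> \<phi> \<in> lin_span_c S"
  unfolding lin_span_c_def by (auto intro!: exI[of _ 1] exI[of _ "\<lambda>_. 1"] exI[of _ "\<lambda>_. \<phi>"])

lemma ket0_l2:
  assumes "z x \<in> T x"
  shows "ket0 z {x} \<in> l2 T {x}"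
proof (rule l2I)
  have z: "restr {x} z \<in> asg T {x}"
    by (rule asgI) (auto simp: restr_def assms)
  show "ket0 z {x} m = 0" if "m \<notin> asg T {x}" for m
    using that z unfolding ket0_def by auto
  have "(\<lambda>m. (cmod (ket0 z {x} m))^2) summable_on {restr {x} z}"
    by simp
  then show "(\<lambda>m. (cmod (ket0 z {x} m))^2) summable_on asg T {x}"
    by (rule summable_on_cong_neutral[THEN iffD2, rotated 3]) (auto simp: ket0_def z)
qed

subsection \<open>Partial traces\<close>

lemma merge_merge: "merge W2 b (merge W1 a s) = merge (W1 \<union> W2) (merge W2 b a) s"
  by (auto simp: merge_def)

lemma inj_on_merge: "inj_on (\<lambda>u. merge W u s) (asg T W)"
proof (rule inj_onI)
  fix u u' assume "u \<in> asg T W" "u' \<in> asg T W" "merge W u s = merge W u' s"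
  then show "u = u'"
  proof (intro ext)
    fix v
    show "u v = u' v"
      using fun_cong[OF \<open>merge W u s = merge W u' s\<close>, of v]
        asg_undefined[OF \<open>u \<in> asg T W\<close>, of v] asg_undefined[OF \<open>u' \<in> asg T W\<close>, of v]
      by (auto simp: merge_def split: if_splits)
  qed
qed

lemma bij_betw_merge_asg:
  assumes "W1 \<inter> W2 = {}"
  shows "bij_betw (\<lambda>(a, b). merge W2 b a) (asg T W1 \<times> asg T W2) (asg T (W1 \<union> W2))"
proof (rule bij_betwI[where g = "\<lambda>u. (restr W1 u, restr W2 u)"])
  show "(\<lambda>(a, b). merge W2 b a) \<in> asg T W1 \<times> asg T W2 \<rightarrow> asg T (W1 \<union> W2)"
    using merge_in_asg by (fastforce simp: Un_commute)
  show "(\<lambda>u. (restr W1 u, restr W2 u)) \<in> asg T (W1 \<union> W2) \<rightarrow> asg T W1 \<times> asg T W2"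
    by (auto intro: restr_in_asg)
  show "(\<lambda>u. (restr W1 u, restr W2 u)) ((\<lambda>(a, b). merge W2 b a) ab) = ab"
    if "ab \<in> asg T W1 \<times> asg T W2" for ab
    using that assms by (cases ab) (auto simp: restr_def merge_def fun_eq_iff asg_def)
  show "(\<lambda>(a, b). merge W2 b a) (restr W1 u, restr W2 u) = u" if "u \<in> asg T (W1 \<union> W2)" for u
    using asg_undefined[OF that] by (auto simp: restr_def merge_def fun_eq_iff)
qed

lemma ptrace_summable:
  assumes mm: "mixed_memory T Y \<rho>" and W: "W \<subseteq> Y"
    and s: "s \<in> asg T (Y - W)" and t: "t \<in> asg T (Y - W)"
  shows "(\<lambda>u. \<rho> (merge W u s) (merge W u t)) summable_on asg T W"
proof -
  have diag: "(\<lambda>u. Re (\<rho> (merge W u w) (merge W u w))) summable_on asg T W"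
    if w: "w \<in> asg T (Y - W)" for w
  proof -
    have "W \<union> (Y - W) = Y"
      using W by auto
    then have "(\<lambda>u. merge W u w) ` asg T W \<subseteq> asg T Y"
      using merge_in_asg[OF _ w, of _ W] by (metis image_subsetI)
    then have "(\<lambda>m. Re (\<rho> m m)) summable_on (\<lambda>u. merge W u w) ` asg T W"
      by (rule summable_on_subset_banach[OF mixed_memory_diag_Re_summable[OF mm]])
    then show ?thesis
      using summable_on_reindex[OF inj_on_merge[of W w T], of "\<lambda>m. Re (\<rho> m m)"] by (simp add: o_def)
  qed
  have "(\<lambda>u. norm (\<rho> (merge W u s) (merge W u t))) summable_on asg T W"
  proof (rule summable_on_comparison_test)
    show "(\<lambda>u. (Re (\<rho> (merge W u s) (merge W u s)) + Re (\<rho> (merge W u t) (merge W u t))) / 2)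
        summable_on asg T W"
      using summable_on_cmult_left[OF summable_on_add[OF diag[OF s] diag[OF t]], of "1/2"] by simp
  qed (use mixed_memory_norm_le_mean[OF mm] in auto)
  then show ?thesis
    by (rule abs_summable_summable)
qed

lemma ptrace_Un:
  assumes mm: "mixed_memory T Y \<rho>" and W: "W1 \<union> W2 \<subseteq> Y" "W1 \<inter> W2 = {}"
  shows "ptrace T Y (W1 \<union> W2) \<rho> = ptrace T (Y - W2) W1 (ptrace T Y W2 \<rho>)"
proof (intro ext)
  fix s t
  have Y: "Y - W2 - W1 = Y - (W1 \<union> W2)"
    by auto
  show "ptrace T Y (W1 \<union> W2) \<rho> s t = ptrace T (Y - W2) W1 (ptrace T Y W2 \<rho>) s t"
  proof (cases "s \<in> asg T (Y - (W1 \<union> W2)) \<and> t \<in> asg T (Y - (W1 \<union> W2))")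
    case True
    let ?f = "\<lambda>u. \<rho> (merge (W1 \<union> W2) u s) (merge (W1 \<union> W2) u t)"
    let ?g = "\<lambda>(a, b). merge W2 b a"
    have bij: "bij_betw ?g (asg T W1 \<times> asg T W2) (asg T (W1 \<union> W2))"
      by (rule bij_betw_merge_asg[OF W(2)])
    have in_Y_W2: "merge W1 a w \<in> asg T (Y - W2)" if "a \<in> asg T W1" "w \<in> asg T (Y - (W1 \<union> W2))" for a w
    proof -
      have "W1 \<union> (Y - (W1 \<union> W2)) = Y - W2"
        using W by auto
      then show ?thesis using merge_in_asg[OF that] by simp
    qed
    have "(\<lambda>ab. ?f (?g ab)) summable_on asg T W1 \<times> asg T W2"
      using summable_on_reindex_bij_betw[OF bij, of ?f] ptrace_summable[OF mm W(1)] True by simp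
    then have "infsum ?f (asg T (W1 \<union> W2))
        = infsum (\<lambda>a. infsum (\<lambda>b. ?f (?g (a, b))) (asg T W2)) (asg T W1)"
      unfolding infsum_reindex_bij_betw[OF bij, of ?f, symmetric]
      by (rule infsum_Sigma_banach[symmetric])
    also have "\<dots> = infsum (\<lambda>a. ptrace T Y W2 \<rho> (merge W1 a s) (merge W1 a t)) (asg T W1)"
      using True in_Y_W2 by (intro infsum_cong) (simp add: ptrace_def merge_merge)
    finally show ?thesis
      using True unfolding ptrace_def[of T Y "W1 \<union> W2"] ptrace_def[of T "Y - W2"] Y by simp
  qed (auto simp: ptrace_def Y)
qed

subsection \<open>Renaming a program variable into a ghost\<close>

definition rename_asg :: "'v \<Rightarrow> 'v \<Rightarrow> ('v \<Rightarrow> 'a) \<Rightarrow> ('v \<Rightarrow> 'a)" where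
  "rename_asg x e s = s(x := s e, e := undefined)"

definition init_asgs :: "('v \<Rightarrow> 'a set) \<Rightarrow> ('v \<Rightarrow> 'a) \<Rightarrow> 'v \<Rightarrow> 'v \<Rightarrow> 'v set \<Rightarrow> ('v \<Rightarrow> 'a) set" where
  "init_asgs T z x e V = {s \<in> asg T (insert e V). s x = z x}"

text \<open>The kernel of \<open>\<rho>{e/x} \<otimes> |0\<rangle>\<langle>0|\<^sub>x\<close> over \<open>V \<union> {e}\<close>, for \<open>\<rho>\<close> over \<open>V\<close>.\<close>
definition rename_init :: "('v \<Rightarrow> 'a set) \<Rightarrow> ('v \<Rightarrow> 'a) \<Rightarrow> 'v \<Rightarrow> 'v \<Rightarrow> 'v set
    \<Rightarrow> (('v \<Rightarrow> 'a) \<Rightarrow> ('v \<Rightarrow> 'a) \<Rightarrow> complex) \<Rightarrow> (('v \<Rightarrow> 'a) \<Rightarrow> ('v \<Rightarrow> 'a) \<Rightarrow> complex)" where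
  "rename_init T z x e V \<rho> = (\<lambda>s t. if s \<in> init_asgs T z x e V \<and> t \<in> init_asgs T z x e V
      then \<rho> (rename_asg x e s) (rename_asg x e t) else 0)"

definition rename_vec :: "('v \<Rightarrow> 'a set) \<Rightarrow> 'v \<Rightarrow> 'v \<Rightarrow> 'v set
    \<Rightarrow> (('v \<Rightarrow> 'a) \<Rightarrow> complex) \<Rightarrow> (('v \<Rightarrow> 'a) \<Rightarrow> complex)" where
  "rename_vec T x e V \<phi> = (\<lambda>m. if m \<in> asg T (V - {x} \<union> {e}) then \<phi> (rename_asg x e m) else 0)"

lemma rename_vec_in_rename_pred: "\<phi> \<in> A \<Longrightarrow> rename_vec T x e V \<phi> \<in> rename_pred T V x e A"
  unfolding rename_pred_def rename_vec_def rename_asg_def by blast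

locale var_renaming =
  fixes T :: "'v \<Rightarrow> 'a set" and z :: "'v \<Rightarrow> 'a" and x e :: 'v and V :: "'v set"
  assumes x_in: "x \<in> V" and e_notin: "e \<notin> V" and type_eq: "T e = T x" and zero_in: "z x \<in> T x"
begin

lemma x_neq_e: "x \<noteq> e"
  using x_in e_notin by blast

lemma init_asgs_subset: "init_asgs T z x e V \<subseteq> asg T (insert e V)"
  unfolding init_asgs_def by blast

lemma bij_betw_rename_init_asgs: "bij_betw (rename_asg x e) (init_asgs T z x e V) (asg T V)"
proof (rule bij_betwI[where g = "\<lambda>m. m(e := m x, x := z x)"])
  show "rename_asg x e \<in> init_asgs T z x e V \<rightarrow> asg T V"
    using x_in e_notin type_eq x_neq_e
    by (auto simp: init_asgs_def rename_asg_def asg_def)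
  show "(\<lambda>m. m(e := m x, x := z x)) \<in> asg T V \<rightarrow> init_asgs T z x e V"
    using x_in e_notin type_eq x_neq_e zero_in
    by (auto simp: init_asgs_def asg_def)
  show "(rename_asg x e s)(e := rename_asg x e s x, x := z x) = s" if "s \<in> init_asgs T z x e V" for s
    using that x_neq_e by (auto simp: init_asgs_def rename_asg_def)
  show "rename_asg x e (m(e := m x, x := z x)) = m" if "m \<in> asg T V" for m
    using asg_undefined[OF that, of e] e_notin x_neq_e by (auto simp: rename_asg_def)
qed

lemma bij_betw_rename_asg: "bij_betw (rename_asg x e) (asg T (V - {x} \<union> {e})) (asg T V)"
proof (rule bij_betwI[where g = "\<lambda>m. m(e := m x, x := undefined)"])
  show "rename_asg x e \<in> asg T (V - {x} \<union> {e}) \<rightarrow> asg T V"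
    using x_in e_notin type_eq x_neq_e
    by (auto simp: rename_asg_def asg_def)
  show "(\<lambda>m. m(e := m x, x := undefined)) \<in> asg T V \<rightarrow> asg T (V - {x} \<union> {e})"
    using x_in e_notin type_eq x_neq_e
    by (auto simp: asg_def)
  show "(rename_asg x e s)(e := rename_asg x e s x, x := undefined) = s"
    if "s \<in> asg T (V - {x} \<union> {e})" for s
    using asg_undefined[OF that, of x] x_neq_e by (auto simp: rename_asg_def)
  show "rename_asg x e (m(e := m x, x := undefined)) = m" if "m \<in> asg T V" for m
    using asg_undefined[OF that, of e] e_notin x_neq_e by (auto simp: rename_asg_def)
qed

lemma mixed_memory_rename_init:
  assumes mm: "mixed_memory T V \<rho>"
  shows "mixed_memory T (insert e V) (rename_init T z x e V \<rho>)"
proof (rule mixed_memoryI)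
  let ?S0 = "init_asgs T z x e V" and ?R = "rename_asg x e"
  have bij: "bij_betw ?R ?S0 (asg T V)"
    by (rule bij_betw_rename_init_asgs)
  show "rename_init T z x e V \<rho> s t = 0" if "s \<notin> asg T (insert e V) \<or> t \<notin> asg T (insert e V)" for s t
    using that init_asgs_subset unfolding rename_init_def by auto
  show "Im (\<Sum>s\<in>F. \<Sum>t\<in>F. cnj (c s) * rename_init T z x e V \<rho> s t * c t) = 0 \<and>
        0 \<le> Re (\<Sum>s\<in>F. \<Sum>t\<in>F. cnj (c s) * rename_init T z x e V \<rho> s t * c t)"
    if F: "finite F" "F \<subseteq> asg T (insert e V)" for F c
  proof -
    define F0 where "F0 = F \<inter> ?S0"
    define c' where "c' = c \<circ> inv_into ?S0 ?R"
    have c': "c s = c' (?R s)" if "s \<in> F0" for s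
      using that bij unfolding c'_def F0_def by (simp add: bij_betw_inv_into_left)
    have inj: "inj_on ?R F0"
      using bij unfolding F0_def bij_betw_def by (meson inf_le2 inj_on_subset)
    have "(\<Sum>s\<in>F. \<Sum>t\<in>F. cnj (c s) * rename_init T z x e V \<rho> s t * c t)
        = (\<Sum>s\<in>F0. \<Sum>t\<in>F0. cnj (c s) * rename_init T z x e V \<rho> s t * c t)"
      unfolding F0_def sum.inter_restrict[OF F(1)] by (auto simp: rename_init_def intro!: sum.cong)
    also have "\<dots> = (\<Sum>s\<in>F0. \<Sum>t\<in>F0. cnj (c' (?R s)) * \<rho> (?R s) (?R t) * c' (?R t))"
      by (intro sum.cong refl) (auto simp: c' rename_init_def F0_def)
    also have "\<dots> = (\<Sum>m\<in>?R ` F0. \<Sum>m'\<in>?R ` F0. cnj (c' m) * \<rho> m m' * c' m')"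
      by (simp add: sum.reindex[OF inj])
    finally show ?thesis
      using mixed_memory_form_nonneg[OF mm, of "?R ` F0" c'] F(1) bij
      unfolding F0_def bij_betw_def by auto
  qed
  have "(\<lambda>s. \<rho> (?R s) (?R s)) summable_on ?S0"
    using summable_on_reindex_bij_betw[OF bij, of "\<lambda>m. \<rho> m m"] mixed_memory_diag_summable[OF mm] by simp
  then show "(\<lambda>s. rename_init T z x e V \<rho> s s) summable_on asg T (insert e V)"
    by (rule summable_on_cong_neutral[THEN iffD1, rotated 3])
      (use init_asgs_subset in \<open>auto simp: rename_init_def\<close>)
qed

lemma rename_vec_l2:
  assumes "\<phi> \<in> l2 T V"
  shows "rename_vec T x e V \<phi> \<in> l2 T (V - {x} \<union> {e})"
proof (rule l2I)
  show "rename_vec T x e V \<phi> m = 0" if "m \<notin> asg T (V - {x} \<union> {e})" for m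
    using that unfolding rename_vec_def by simp
  have "(\<lambda>s. (cmod (\<phi> (rename_asg x e s)))^2) summable_on asg T (V - {x} \<union> {e})"
    using summable_on_reindex_bij_betw[OF bij_betw_rename_asg, of "\<lambda>m. (cmod (\<phi> m))^2"]
      l2_norm_sq_summable[OF assms] by simp
  then show "(\<lambda>m. (cmod (rename_vec T x e V \<phi> m))^2) summable_on asg T (V - {x} \<union> {e})"
    by (rule summable_on_cong[THEN iffD1, rotated]) (simp add: rename_vec_def)
qed

lemma vtensor_rename_vec_ket0:
  fixes \<phi> :: "('v \<Rightarrow> 'a) \<Rightarrow> complex"
  defines "W \<equiv> V - {x} \<union> {e}"
    and "\<theta> \<equiv> (\<lambda>s. if s \<in> init_asgs T z x e V then \<phi> (rename_asg x e s) else 0)"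
  shows "vtensor T W {x} (rename_vec T x e V \<phi>) (ket0 z {x}) = \<theta>"
    and "vtensor T {x} W (ket0 z {x}) (rename_vec T x e V \<phi>) = \<theta>"
proof -
  have W: "W \<union> {x} = insert e V" "{x} \<union> W = insert e V"
    unfolding W_def using x_in by auto
  have *: "(if s \<in> asg T (insert e V)
      then rename_vec T x e V \<phi> (restr W s) * ket0 z {x} (restr {x} s) else 0) = \<theta> s" for s
  proof (cases "s \<in> asg T (insert e V)")
    case True
    have "restr W s \<in> asg T W"
      by (rule restr_in_asg[OF True]) (auto simp: W_def)
    moreover have "rename_asg x e (restr W s) = rename_asg x e s"
      using x_neq_e asg_undefined[OF True] by (auto simp: rename_asg_def restr_def W_def fun_eq_iff)
    moreover have "restr {x} s = restr {x} z \<longleftrightarrow> s x = z x"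
      by (auto simp: restr_def fun_eq_iff)
    ultimately show ?thesis
      using True unfolding rename_vec_def ket0_def \<theta>_def init_asgs_def W_def by auto
  next
    case False
    then show ?thesis using init_asgs_subset unfolding \<theta>_def by auto
  qed
  show "vtensor T W {x} (rename_vec T x e V \<phi>) (ket0 z {x}) = \<theta>"
    unfolding vtensor_def W using * by simp
  show "vtensor T {x} W (ket0 z {x}) (rename_vec T x e V \<phi>) = \<theta>"
    unfolding vtensor_def W using * by (simp only: mult.commute)
qed

lemma kapply_rename_init:
  assumes \<psi>: "\<psi> \<in> l2 T (insert e V)"
  obtains \<psi>' where "\<psi>' \<in> l2 T V"
    and "kapply T (insert e V) (rename_init T z x e V \<rho>) \<psi>
           = (\<lambda>s. if s \<in> init_asgs T z x e V then kapply T V \<rho> \<psi>' (rename_asg x e s) else 0)"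
proof
  let ?S0 = "init_asgs T z x e V" and ?R = "rename_asg x e"
  have bij: "bij_betw ?R ?S0 (asg T V)"
    by (rule bij_betw_rename_init_asgs)
  define \<psi>' where "\<psi>' m = (if m \<in> asg T V then \<psi> (inv_into ?S0 ?R m) else 0)" for m
  have \<psi>'_R: "\<psi>' (?R s) = \<psi> s" if "s \<in> ?S0" for s
    using that bij by (auto simp: \<psi>'_def bij_betw_inv_into_left bij_betw_apply)
  show "\<psi>' \<in> l2 T V"
  proof (rule l2I)
    have "(\<lambda>s. (cmod (\<psi> s))^2) summable_on ?S0"
      by (rule summable_on_subset_banach[OF l2_norm_sq_summable[OF \<psi>] init_asgs_subset])
    then have "(\<lambda>s. (cmod (\<psi>' (?R s)))^2) summable_on ?S0"
      by (rule summable_on_cong[THEN iffD1, rotated]) (simp add: \<psi>'_R)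
    then show "(\<lambda>m. (cmod (\<psi>' m))^2) summable_on asg T V"
      using summable_on_reindex_bij_betw[OF bij, of "\<lambda>m. (cmod (\<psi>' m))^2"] by simp
  qed (simp add: \<psi>'_def)
  show "kapply T (insert e V) (rename_init T z x e V \<rho>) \<psi>
      = (\<lambda>s. if s \<in> ?S0 then kapply T V \<rho> \<psi>' (?R s) else 0)"
  proof
    fix s
    show "kapply T (insert e V) (rename_init T z x e V \<rho>) \<psi> s
        = (if s \<in> ?S0 then kapply T V \<rho> \<psi>' (?R s) else 0)"
    proof (cases "s \<in> ?S0")
      case True
      have "kapply T (insert e V) (rename_init T z x e V \<rho>) \<psi> s
          = infsum (\<lambda>t. \<rho> (?R s) (?R t) * \<psi>' (?R t)) ?S0"
        unfolding kapply_def
        by (rule infsum_cong_neutral) (use True init_asgs_subset in \<open>auto simp: rename_init_def \<psi>'_R\<close>)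
      also have "\<dots> = kapply T V \<rho> \<psi>' (?R s)"
        unfolding kapply_def by (rule infsum_reindex_bij_betw[OF bij])
      finally show ?thesis using True by simp
    qed (simp add: kapply_def rename_init_def)
  qed
qed

lemma supp_rename_init:
  assumes mm: "mixed_memory T V \<rho>" and supp: "supp T V \<rho> \<subseteq> A"
  shows "supp T (insert e V) (rename_init T z x e V \<rho>)
    \<subseteq> lift T (V - {x} \<union> {e}) {x} (rename_pred T V x e A)
      \<inter> lift T {x} (V - {x} \<union> {e}) (lin_span_c {ket0 z {x}})"
proof -
  define W where "W = V - {x} \<union> {e}"
  have W: "W \<union> {x} = insert e V" "{x} \<union> W = insert e V"
    unfolding W_def using x_in by auto
  have range: "kapply T (insert e V) (rename_init T z x e V \<rho>) \<psi>
      \<in> {vtensor T W {x} \<phi> \<eta> | \<phi> \<eta>. \<phi> \<in> rename_pred T V x e A \<and> \<eta> \<in> l2 T {x}}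
       \<inter> {vtensor T {x} W \<phi> \<eta> | \<phi> \<eta>. \<phi> \<in> lin_span_c {ket0 z {x}} \<and> \<eta> \<in> l2 T W}"
    if \<psi>: "\<psi> \<in> l2 T (insert e V)" for \<psi>
  proof -
    obtain \<psi>' where \<psi>': "\<psi>' \<in> l2 T V" and kapply:
      "kapply T (insert e V) (rename_init T z x e V \<rho>) \<psi>
         = (\<lambda>s. if s \<in> init_asgs T z x e V then kapply T V \<rho> \<psi>' (rename_asg x e s) else 0)"
      using kapply_rename_init[OF \<psi>] by blast
    define \<phi> where "\<phi> = kapply T V \<rho> \<psi>'"
    have \<phi>_l2: "\<phi> \<in> l2 T V"
      unfolding \<phi>_def by (rule kapply_l2[OF mm \<psi>'])
    have "\<phi> \<in> supp T V \<rho>"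
      unfolding supp_def by (rule l2closure_superset[OF _ \<phi>_l2]) (use \<psi>' \<phi>_def in blast)
    then have "rename_vec T x e V \<phi> \<in> rename_pred T V x e A"
      using supp by (intro rename_vec_in_rename_pred) blast
    then show ?thesis
      using vtensor_rename_vec_ket0[of \<phi>, symmetric] rename_vec_l2[OF \<phi>_l2] ket0_l2[of z x T, OF zero_in]
        lin_span_c_superset[of "ket0 z {x}" "{ket0 z {x}}"]
      unfolding kapply \<phi>_def[symmetric] W_def by blast
  qed
  show ?thesis
    unfolding supp_def lift_def W_def[symmetric] W
    by (intro Int_greatest l2closure_mono subsetI; use range lin_span_c_superset in blast)
qed

lemma ktensor_rename_init:
  assumes U: "U \<inter> insert e V = {}"
  shows "ktensor T (insert e V) U (rename_init T z x e V a) b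
       = rename_init T z x e (V \<union> U) (ktensor T V U a b)"
proof (intro ext)
  fix s t
  interpret VU: var_renaming T z x e "V \<union> U"
    using x_in e_notin type_eq zero_in U by unfold_locales auto
  have VU: "insert e V \<union> U = insert e (V \<union> U)"
    by auto
  have init: "restr (insert e V) w \<in> init_asgs T z x e V \<longleftrightarrow> w x = z x"
    if "w \<in> asg T (insert e (V \<union> U))" for w
    using restr_in_asg[OF that, of "insert e V"] x_in unfolding init_asgs_def restr_def by auto
  have rename_restr: "rename_asg x e (restr (insert e V) w) = restr V (rename_asg x e w)" for w
    using x_in e_notin x_neq_e by (auto simp: rename_asg_def restr_def)
  have restr_U: "restr U (rename_asg x e w) = restr U w" for w
    using U x_in by (auto simp: rename_asg_def restr_def fun_eq_iff)
  show "ktensor T (insert e V) U (rename_init T z x e V a) b s t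
      = rename_init T z x e (V \<union> U) (ktensor T V U a b) s t"
  proof (cases "s \<in> init_asgs T z x e (V \<union> U) \<and> t \<in> init_asgs T z x e (V \<union> U)")
    case True
    then have "rename_asg x e s \<in> asg T (V \<union> U)" "rename_asg x e t \<in> asg T (V \<union> U)"
      using VU.bij_betw_rename_init_asgs by (auto simp: bij_betw_apply)
    then show ?thesis
      using True init
      unfolding ktensor_def rename_init_def VU by (auto simp: init_asgs_def rename_restr restr_U)
  next
    case False
    then show ?thesis
      using init unfolding ktensor_def rename_init_def VU by (auto simp: init_asgs_def)
  qed
qed

lemma separable_rename_init:
  assumes sep: "separable T V U \<rho>" and U: "U \<inter> insert e V = {}"
  shows "separable T (insert e V) U (rename_init T z x e (V \<union> U) \<rho>)"
proof -
  obtain \<rho>1 \<rho>2 where mm: "\<And>i::nat. mixed_memory T V (\<rho>1 i) \<and> mixed_memory T U (\<rho>2 i)"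
    and sums: "\<And>s t. (\<lambda>i. ktensor T V U (\<rho>1 i) (\<rho>2 i) s t) sums \<rho> s t"
    using sep unfolding separable_def by blast
  have "(\<lambda>i. ktensor T (insert e V) U (rename_init T z x e V (\<rho>1 i)) (\<rho>2 i) s t)
      sums rename_init T z x e (V \<union> U) \<rho> s t" for s t
    unfolding ktensor_rename_init[OF U] rename_init_def[of _ _ _ _ "V \<union> U"]
    by (cases "s \<in> init_asgs T z x e (V \<union> U) \<and> t \<in> init_asgs T z x e (V \<union> U)")
      (auto simp: sums)
  then show ?thesis
    unfolding separable_def using mm mixed_memory_rename_init
    by (intro exI[of _ "\<lambda>i. rename_init T z x e V (\<rho>1 i)"] exI[of _ \<rho>2] conjI allI) auto
qed

lemma ptrace_rename_init:
  assumes G: "G \<subseteq> V" "x \<notin> G"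
  shows "ptrace T (insert e V) G (rename_init T z x e V \<rho>)
       = rename_init T z x e (V - G) (ptrace T V G \<rho>)"
proof (intro ext)
  fix s t
  interpret VG: var_renaming T z x e "V - G"
    using x_in e_notin type_eq zero_in G by unfold_locales auto
  have eG: "insert e V - G = insert e (V - G)"
    using G e_notin by auto
  have merge_init: "merge G u w \<in> init_asgs T z x e V \<longleftrightarrow> w x = z x"
    if "u \<in> asg T G" "w \<in> asg T (insert e (V - G))" for u w
  proof -
    have "G \<union> insert e (V - G) = insert e V"
      using G by auto
    then show ?thesis
      using merge_in_asg[OF that] G(2) by (auto simp: init_asgs_def merge_def)
  qed
  have rename_merge: "rename_asg x e (merge G u w) = merge G u (rename_asg x e w)" for u w
    using G e_notin x_neq_e by (auto simp: rename_asg_def merge_def fun_eq_iff)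
  show "ptrace T (insert e V) G (rename_init T z x e V \<rho>) s t
      = rename_init T z x e (V - G) (ptrace T V G \<rho>) s t"
  proof (cases "s \<in> init_asgs T z x e (V - G) \<and> t \<in> init_asgs T z x e (V - G)")
    case True
    then have "rename_asg x e s \<in> asg T (V - G)" "rename_asg x e t \<in> asg T (V - G)"
      using VG.bij_betw_rename_init_asgs by (auto simp: bij_betw_apply)
    moreover have "s \<in> asg T (insert e (V - G))" "t \<in> asg T (insert e (V - G))"
      "s x = z x" "t x = z x"
      using True unfolding init_asgs_def by auto
    ultimately show ?thesis
      using True merge_init
      by (auto simp: ptrace_def rename_init_def eG rename_merge intro!: infsum_cong)
  next
    case False
    have "ptrace T (insert e V) G (rename_init T z x e V \<rho>) s t = 0"
    proof (cases "s \<in> asg T (insert e (V - G)) \<and> t \<in> asg T (insert e (V - G))")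
      case True
      then have "\<not> (s x = z x \<and> t x = z x)"
        using False unfolding init_asgs_def by auto
      then show ?thesis
        using True merge_init by (auto simp: ptrace_def rename_init_def eG intro: infsum_0)
    qed (auto simp: ptrace_def eG)
    then show ?thesis
      using False by (auto simp: rename_init_def)
  qed
qed

lemma ptrace_ghost_rename_init:
  "ptrace T (insert e V) {e} (rename_init T z x e V \<sigma>) = init_sem T z V x \<sigma>"
proof (intro ext)
  fix s t
  interpret single: var_renaming T z x e "{x}"
    using x_neq_e type_eq zero_in by unfold_locales auto
  have bij: "bij_betw (rename_asg x e) (asg T {e}) (asg T {x})"
    using single.bij_betw_rename_asg by simp
  have V: "insert e V - {e} = V" "V - {x} \<union> {x} = V"
    using e_notin x_in by auto
  show "ptrace T (insert e V) {e} (rename_init T z x e V \<sigma>) s t = init_sem T z V x \<sigma> s t"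
  proof (cases "s \<in> asg T V \<and> t \<in> asg T V")
    case True
    define s0 t0 where "s0 = restr (V - {x}) s" and "t0 = restr (V - {x}) t"
    have s0t0: "s0 \<in> asg T (V - {x})" "t0 \<in> asg T (V - {x})"
      unfolding s0_def t0_def using True by (auto intro: restr_in_asg)
    have init: "merge {e} u w \<in> init_asgs T z x e V \<longleftrightarrow> w x = z x"
      if "u \<in> asg T {e}" "w \<in> asg T V" for u w
      using merge_in_asg[OF that] x_neq_e by (auto simp: init_asgs_def merge_def)
    have rename: "rename_asg x e (merge {e} u w) = merge {x} (rename_asg x e u) (restr (V - {x}) w)"
      if "w \<in> asg T V" for u w
      using asg_undefined[OF that] e_notin x_neq_e
      by (auto simp: rename_asg_def merge_def restr_def fun_eq_iff)
    have proj: "proj0 z {x} (restr {x} s) (restr {x} t) = (if s x = z x \<and> t x = z x then 1 else 0)"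
      by (auto simp: proj0_def restr_def fun_eq_iff)
    have "ptrace T (insert e V) {e} (rename_init T z x e V \<sigma>) s t
        = infsum (\<lambda>u. if s x = z x \<and> t x = z x
            then \<sigma> (merge {x} (rename_asg x e u) s0) (merge {x} (rename_asg x e u) t0) else 0) (asg T {e})"
      using True init rename unfolding s0_def t0_def
      by (auto simp: ptrace_def rename_init_def V intro!: infsum_cong)
    also have "\<dots> = (if s x = z x \<and> t x = z x
        then infsum (\<lambda>u. \<sigma> (merge {x} (rename_asg x e u) s0) (merge {x} (rename_asg x e u) t0)) (asg T {e})
        else 0)"
      by (cases "s x = z x \<and> t x = z x") auto
    also have "\<dots> = init_sem T z V x \<sigma> s t"
      using True s0t0 infsum_reindex_bij_betw[OF bij, of "\<lambda>a. \<sigma> (merge {x} a s0) (merge {x} a t0)"]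
      unfolding init_sem_def ktensor_def ptrace_def V proj s0_def[symmetric] t0_def[symmetric]
      by simp
    finally show ?thesis .
  qed (auto simp: ptrace_def init_sem_def ktensor_def V insert_absorb[OF x_in])
qed

lemma ptrace_ghosts_rename_init:
  assumes mm: "mixed_memory T V \<rho>" and G: "G \<subseteq> V" "x \<notin> G"
  shows "ptrace T (insert e V) ({e} \<union> G) (rename_init T z x e V \<rho>)
       = init_sem T z (V - G) x (ptrace T V G \<rho>)"
proof -
  interpret VG: var_renaming T z x e "V - G"
    using x_in e_notin type_eq zero_in G by unfold_locales auto
  have eG: "insert e V - G = insert e (V - G)"
    using G e_notin by auto
  have "ptrace T (insert e V) ({e} \<union> G) (rename_init T z x e V \<rho>)
      = ptrace T (insert e V - G) {e} (ptrace T (insert e V) G (rename_init T z x e V \<rho>))"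
    by (rule ptrace_Un[OF mixed_memory_rename_init[OF mm]]) (use G e_notin in auto)
  also have "\<dots> = ptrace T (insert e (V - G)) {e} (rename_init T z x e (V - G) (ptrace T V G \<rho>))"
    unfolding eG ptrace_rename_init[OF G] ..
  also have "\<dots> = init_sem T z (V - G) x (ptrace T V G \<rho>)"
    by (rule VG.ptrace_ghost_rename_init)
  finally show ?thesis .
qed

end

lemma satisfies_init_sem:
  assumes disjoint: "Xall \<inter> E = {}" "Xall \<inter> U = {}" "E \<inter> U = {}"
    and x: "x \<in> Xall" and e: "e \<notin> Xall \<union> E \<union> U" and type_eq: "T e = T x" and zero: "z x \<in> T x"
    and sat: "satisfies T Xall E U \<rho> A"
  shows "satisfies T Xall (insert e E) U (init_sem T z Xall x \<rho>)
           (lift T ((Xall - {x}) \<union> {e} \<union> E \<union> U) {x} (rename_pred T (Xall \<union> E \<union> U) x e A)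
            \<inter> qeq T {x} (ket0 z {x}) (Xall \<union> insert e E \<union> U))"
proof -
  obtain \<rho>o where mm: "mixed_memory T (Xall \<union> E \<union> U) \<rho>o"
    and sep: "separable T (Xall \<union> E) U \<rho>o" and supp: "supp T (Xall \<union> E \<union> U) \<rho>o \<subseteq> A"
    and trace: "ptrace T (Xall \<union> E \<union> U) (E \<union> U) \<rho>o = \<rho>"
    using sat unfolding satisfies_def by blast
  define Y where "Y = Xall \<union> E \<union> U"
  interpret Y: var_renaming T z x e Y
    using x e type_eq zero unfolding Y_def by unfold_locales auto
  interpret XE: var_renaming T z x e "Xall \<union> E"
    using x e type_eq zero by unfold_locales auto
  have Y': "Xall \<union> insert e E \<union> U = insert e Y"
    and XE': "Xall \<union> insert e E = insert e (Xall \<union> E)"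
    and W: "Xall - {x} \<union> {e} \<union> E \<union> U = Y - {x} \<union> {e}" "insert e Y - {x} = Y - {x} \<union> {e}"
    and G': "insert e E \<union> U = {e} \<union> (E \<union> U)"
    and X: "Y - (E \<union> U) = Xall"
    using x e disjoint unfolding Y_def by auto
  have G: "E \<union> U \<subseteq> Y" "x \<notin> E \<union> U"
    using x disjoint unfolding Y_def by auto
  have "ptrace T (Xall \<union> insert e E \<union> U) (insert e E \<union> U) (rename_init T z x e Y \<rho>o)
      = init_sem T z Xall x \<rho>"
    using Y.ptrace_ghosts_rename_init[OF mm[folded Y_def] G]
    unfolding Y' G' X trace[folded Y_def] .
  moreover have "mixed_memory T (Xall \<union> insert e E \<union> U) (rename_init T z x e Y \<rho>o)"
    unfolding Y' by (rule Y.mixed_memory_rename_init[OF mm[folded Y_def]])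
  moreover have "separable T (Xall \<union> insert e E) U (rename_init T z x e Y \<rho>o)"
    unfolding XE' Y_def by (rule XE.separable_rename_init[OF sep]) (use e disjoint in auto)
  moreover have "supp T (Xall \<union> insert e E \<union> U) (rename_init T z x e Y \<rho>o)
      \<subseteq> lift T ((Xall - {x}) \<union> {e} \<union> E \<union> U) {x} (rename_pred T (Xall \<union> E \<union> U) x e A)
        \<inter> qeq T {x} (ket0 z {x}) (Xall \<union> insert e E \<union> U)"
    unfolding qeq_def Y' W Y_def[symmetric]
    by (rule Y.supp_rename_init[OF mm[folded Y_def] supp[folded Y_def]])
  ultimately show ?thesis
    unfolding satisfies_def by blast
qed

theorem lemma16:
  fixes T :: "'v \<Rightarrow> 'a set" and z :: "'v \<Rightarrow> 'a" and kind :: "'v \<Rightarrow> vkind"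
    and Xall E U :: "'v set" and x e :: 'v
    and A :: "(('v \<Rightarrow> 'a) \<Rightarrow> complex) set"
  assumes "\<forall>v. z v \<in> T v"
    and "\<forall>v\<in>Xall. kind v = Prog"
    and "\<forall>v\<in>E. kind v = EGhost"
    and "\<forall>v\<in>U. kind v = UGhost"
    and "is_predicate T (Xall \<union> E \<union> U) A"
    and "x \<in> Xall"
    and "kind e = EGhost" and "e \<notin> E \<union> U" and "T e = T x"
  shows "hoare T Xall E U A (init_sem T z Xall x) (insert e E) U
           (lift T ((Xall - {x}) \<union> {e} \<union> E \<union> U) {x} (rename_pred T (Xall \<union> E \<union> U) x e A)
            \<inter> qeq T {x} (ket0 z {x}) (Xall \<union> insert e E \<union> U))"
proof -
  have disjoint: "Xall \<inter> E = {}" "Xall \<inter> U = {}" "E \<inter> U = {}"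
    and "e \<notin> Xall \<union> E \<union> U"
    using assms(2-4,7,8) by fastforce+
  then show ?thesis
    unfolding hoare_def
    using satisfies_init_sem[OF disjoint assms(6) _ assms(9), of z] assms(1) by blast
qed

end
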